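(* Let $\alpha>0$ be fixed and let $\mathscr{N}$ be a feasible functional on a finite dimensional Hilbert space $\mathcal{H}$. Consider the augmented dual ascent scheme $$x^{n+1} = \operatorname{arg\,min}_{x} \mathscr{N}^{**}(x)+\langle x,\Lambda^n\rangle +\frac{\alpha}{2}\|x\|^2,\qquad \Lambda^{n+1} = \Lambda^{n} + \alpha\mathcal{P}_{\mathcal{M}^\perp}(x^{n+1}),\qquad \Lambda^0=0.$$ Suppose that $\mathscr{N}$ is finite-valued, or that $(\Lambda^{n})_{n=1}^\infty$ is a bounded sequence. Then $(x^{n})_{n=1}^\infty$ and $(\Lambda^{n})_{n=1}^\infty$ converge to some limits $x^\star$ and $\Lambda^\star$, where $x^\star$ is the solution to $\operatorname{arg\,min}_{x\in\mathcal{M}}\mathscr{N}^{**}(x)+\frac{\alpha}{2}\|x\|^2$.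
   Context: $\mathcal{M}\subset\mathcal{H}$ is a linear subspace, $\mathcal{P}_{\mathcal{M}^\perp}$ the orthogonal projection onto $\mathcal{M}^\perp$, $\mathscr{N}^{**}$ the double Fenchel conjugate (l.s.c. convex envelope) of $\mathscr{N}$. A functional $\mathscr{N}:\mathcal{H}\to(-\infty,\infty]$ is called feasible if it is lower semi-continuous, proper, bounded below, and satisfies $\lim_{\|x\|\rightarrow\infty}\mathscr{N}(x)/\|x\|=\infty$. *)

theory Defs
  imports "HOL-Analysis.Analysis"
begin

definition lsc :: "('a::topological_space \<Rightarrow> ereal) \<Rightarrow> bool" where
  "lsc f \<longleftrightarrow> (\<forall>c::ereal. closed {x. f x \<le> c})"

definition feasible :: "('a::real_normed_vector \<Rightarrow> ereal) \<Rightarrow> bool" where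
  "feasible N \<longleftrightarrow>
     lsc N \<and>
     (\<forall>x. N x \<noteq> -\<infinity>) \<and> (\<exists>x. N x \<noteq> \<infinity>) \<and>
     (\<exists>c::real. \<forall>x. ereal c \<le> N x) \<and>
     ((\<lambda>x. N x / ereal (norm x)) \<longlongrightarrow> \<infinity>) at_infinity"

definition fconj :: "('a::real_inner \<Rightarrow> ereal) \<Rightarrow> 'a \<Rightarrow> ereal" where
  "fconj f y = (SUP x. ereal (x \<bullet> y) - f x)"

definition proj_perp :: "'a::real_inner set \<Rightarrow> 'a \<Rightarrow> 'a" where
  "proj_perp M x = (THE y. y \<in> orthogonal_comp M \<and> x - y \<in> M)"

end

theory Submission
  imports Defs
begin

text \<open>
  The biconjugate \<open>g = N\<^sup>*\<^sup>*\<close> is convex, lower semicontinuous and bounded below, so each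
  primal step minimises an \<open>\<alpha>\<close>-strongly convex function, and its minimiser satisfies a quadratic
  growth inequality. This makes the dual values \<open>d\<^sub>n\<close> (the minimal values of the primal
  subproblems) increase by at least \<open>\<alpha>/2 \<parallel>P\<^sub>M\<^sub>\<bottom> x\<^sup>n\<^sup>+\<^sup>1\<parallel>\<^sup>2\<close> per step.
  If the multipliers stay bounded, the \<open>d\<^sub>n\<close> are bounded above, hence the residuals vanish and the
  iterates are bounded; a cluster point \<open>(x\<^sup>\<star>, \<Lambda>\<^sup>\<star>)\<close> is a saddle point, and for any saddle point
  the distance \<open>\<parallel>\<Lambda>\<^sup>n - \<Lambda>\<^sup>\<star>\<parallel>\<close> is Fej\'er monotone with decrement \<open>\<alpha>\<^sup>2 \<parallel>x\<^sup>n\<^sup>+\<^sup>1 - x\<^sup>\<star>\<parallel>\<^sup>2\<close>, which forces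
  convergence of the whole sequences. If \<open>N\<close> is finite, \<open>g\<close> is a real convex function, hence
  bounded on the unit ball, and testing the subproblem against \<open>-\<Lambda>\<^sup>n/\<parallel>\<Lambda>\<^sup>n\<parallel>\<close> bounds \<open>\<parallel>\<Lambda>\<^sup>n\<parallel>\<close>.
\<close>

section \<open>The biconjugate\<close>

lemma fenchel_young: "ereal (x \<bullet> y) - f x \<le> fconj f y"
  unfolding fconj_def by (rule SUP_upper) auto

lemma biconj_le: "fconj (fconj f) w \<le> f w"
  unfolding fconj_def[of "fconj f"]
proof (rule SUP_least)
  fix y
  have "ereal (w \<bullet> y) - f w \<le> fconj f y" by (rule fenchel_young)
  then show "ereal (y \<bullet> w) - fconj f y \<le> f w"
    by (cases "f w"; cases "fconj f y") (auto simp: inner_commute)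
qed

lemma biconj_ge_const:
  assumes "\<And>x. ereal c \<le> f x"
  shows "ereal c \<le> fconj (fconj f) w"
proof -
  have conj0: "fconj f 0 \<le> ereal (- c)"
    unfolding fconj_def
  proof (rule SUP_least)
    fix x
    show "ereal (x \<bullet> 0) - f x \<le> ereal (- c)"
      using assms[of x] by (cases "f x") auto
  qed
  have "ereal (0 \<bullet> w) - fconj f 0 \<le> fconj (fconj f) w" by (rule fenchel_young)
  with conj0 show ?thesis
  proof (cases "fconj f 0")
    case (real r)
    then have "ereal c \<le> ereal (- r)" using conj0 by simp
    also have "\<dots> \<le> fconj (fconj f) w" using real \<open>ereal (0 \<bullet> w) - fconj f 0 \<le> _\<close> by simp
    finally show ?thesis .
  qed auto
qed

lemma biconj_convex:
  assumes "fconj (fconj f) x = ereal a" "fconj (fconj f) y = ereal b" "0 \<le> t" "t \<le> 1"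
  shows "fconj (fconj f) ((1 - t) *\<^sub>R x + t *\<^sub>R y) \<le> ereal ((1 - t) * a + t * b)"
  unfolding fconj_def[of "fconj f"]
proof (rule SUP_least)
  fix v
  have hx: "ereal (v \<bullet> x) - fconj f v \<le> ereal a"
    using fenchel_young[of v x "fconj f"] assms(1) by (simp add: inner_commute)
  have hy: "ereal (v \<bullet> y) - fconj f v \<le> ereal b"
    using fenchel_young[of v y "fconj f"] assms(2) by (simp add: inner_commute)
  show "ereal (v \<bullet> ((1 - t) *\<^sub>R x + t *\<^sub>R y)) - fconj f v \<le> ereal ((1 - t) * a + t * b)"
  proof (cases "fconj f v")
    case (real s)
    have "v \<bullet> x - s \<le> a" "v \<bullet> y - s \<le> b" using hx hy real by auto
    then have "(1 - t) * (v \<bullet> x - s) + t * (v \<bullet> y - s) \<le> (1 - t) * a + t * b"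
      using assms(3,4) by (meson add_mono mult_left_mono diff_ge_0_iff_ge)
    then show ?thesis using real by (simp add: inner_add_right algebra_simps)
  qed (use hx in auto)
qed

lemma biconj_lsc_sequentially:
  assumes "w \<longlonglongrightarrow> w0" "b \<longlonglongrightarrow> b0" "\<And>k. fconj (fconj f) (w k) \<le> ereal (b k)"
  shows "fconj (fconj f) w0 \<le> ereal b0"
  unfolding fconj_def[of "fconj f"]
proof (rule SUP_least)
  fix v
  have h: "\<And>k. ereal (v \<bullet> w k) - fconj f v \<le> ereal (b k)"
    using fenchel_young[of v "w _" "fconj f"] assms(3) by (metis inner_commute order_trans)
  show "ereal (v \<bullet> w0) - fconj f v \<le> ereal b0"
  proof (cases "fconj f v")
    case (real s)
    have "v \<bullet> w k - s \<le> b k" for k using h real by auto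
    moreover have "(\<lambda>k. v \<bullet> w k - s) \<longlonglongrightarrow> v \<bullet> w0 - s"
      by (intro tendsto_intros assms(1))
    ultimately have "v \<bullet> w0 - s \<le> b0"
      using LIMSEQ_le[OF _ assms(2)] by blast
    then show ?thesis using real by simp
  qed (use h[of 0] in auto)
qed

section \<open>Orthogonal decomposition\<close>

lemma proj_perp:
  fixes M :: "'a::euclidean_space set"
  assumes "subspace M"
  shows "proj_perp M x \<in> orthogonal_comp M" "x - proj_perp M x \<in> M"
proof -
  obtain m p where mp: "m \<in> M" "p \<in> orthogonal_comp M" "x = m + p"
    using subspace_sum_orthogonal_comp[OF assms] by (metis UNIV_I set_plus_elim)
  have unique: "y = p" if "y \<in> orthogonal_comp M" "x - y \<in> M" for y
  proof -
    have "p - y \<in> orthogonal_comp M"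
      using that mp subspace_diff[OF subspace_orthogonal_comp] by blast
    moreover have "p - y \<in> M"
      using that mp subspace_diff[OF assms, of "x - y" m] by (simp add: algebra_simps)
    ultimately have "p - y \<in> M \<inter> orthogonal_comp M" by blast
    then show ?thesis using orthogonal_Int_0[OF assms] by auto
  qed
  have "proj_perp M x = p"
    unfolding proj_perp_def
  proof (rule the_equality)
    show "p \<in> orthogonal_comp M \<and> x - p \<in> M" using mp by simp
  qed (use unique in blast)
  then show "proj_perp M x \<in> orthogonal_comp M" "x - proj_perp M x \<in> M"
    using mp by auto
qed

lemma orthogonal_comp_inner_zero: "m \<in> M \<Longrightarrow> p \<in> orthogonal_comp M \<Longrightarrow> m \<bullet> p = 0"
  by (simp add: orthogonal_comp_def orthogonal_def)

lemma norm_orthogonal_comp_le: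
  "m \<in> M \<Longrightarrow> p \<in> orthogonal_comp M \<Longrightarrow> (norm p)\<^sup>2 \<le> (norm (m + p))\<^sup>2"
  using orthogonal_comp_inner_zero[of m M p]
  by (simp add: power2_norm_eq_inner inner_simps inner_commute)

section \<open>Quadratic growth at the minimiser of a strongly convex function\<close>

lemma norm_convex_combination_sq:
  fixes x y :: "'a::real_inner"
  shows "(norm ((1 - t) *\<^sub>R x + t *\<^sub>R y))\<^sup>2
           = (1 - t) * (norm x)\<^sup>2 + t * (norm y)\<^sup>2 - t * (1 - t) * (norm (y - x))\<^sup>2"
  by (simp add: power2_norm_eq_inner inner_simps inner_commute algebra_simps)

lemma le_diff_of_le_diff_scaled:
  fixes A B K :: real
  assumes "\<And>t. 0 < t \<Longrightarrow> t \<le> 1 \<Longrightarrow> A \<le> B - (1 - t) * K" "K \<ge> 0"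
  shows "A \<le> B - K"
proof (rule ccontr)
  assume c: "\<not> A \<le> B - K"
  have AB: "A \<le> B" using assms(1)[of 1] by simp
  then have K: "K > 0" using c by simp
  define t where "t = (A + K - B) / (2 * K)"
  have "0 < t" "t \<le> 1" using c AB K by (simp_all add: t_def field_simps)
  moreover have "t * K = (A + K - B) / 2" using K by (simp add: t_def field_simps)
  then have "A > B - (1 - t) * K" using c by (simp add: algebra_simps)
  ultimately show False using assms(1) by fastforce
qed

lemma minimizer_quadratic_growth:
  fixes g :: "'a::real_inner \<Rightarrow> ereal"
  assumes conv: "\<And>x y a b t. g x = ereal a \<Longrightarrow> g y = ereal b \<Longrightarrow> 0 \<le> t \<Longrightarrow> t \<le> 1 \<Longrightarrow>
              g ((1 - t) *\<^sub>R x + t *\<^sub>R y) \<le> ereal ((1 - t) * a + t * b)"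
    and "\<alpha> > 0"
    and min: "\<And>y. g x + ereal (x \<bullet> L) + ereal (\<alpha> / 2 * (norm x)\<^sup>2)
                     \<le> g y + ereal (y \<bullet> L) + ereal (\<alpha> / 2 * (norm y)\<^sup>2)"
    and gx: "g x = ereal a" and gy: "g y = ereal b"
  shows "a + x \<bullet> L + \<alpha> / 2 * (norm x)\<^sup>2 + \<alpha> / 2 * (norm (y - x))\<^sup>2
           \<le> b + y \<bullet> L + \<alpha> / 2 * (norm y)\<^sup>2"
proof -
  define A where "A = a + x \<bullet> L + \<alpha> / 2 * (norm x)\<^sup>2"
  define B where "B = b + y \<bullet> L + \<alpha> / 2 * (norm y)\<^sup>2"
  define K where "K = \<alpha> / 2 * (norm (y - x))\<^sup>2"
  \<comment> \<open>compare \<open>x\<close> with \<open>(1 - t) x + t y\<close> and let \<open>t \<rightarrow> 0\<close>\<close>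
  have "A \<le> B - K"
  proof (rule le_diff_of_le_diff_scaled)
    show "K \<ge> 0" using \<open>\<alpha> > 0\<close> by (simp add: K_def)
    fix t :: real assume t: "0 < t" "t \<le> 1"
    define z where "z = (1 - t) *\<^sub>R x + t *\<^sub>R y"
    have "ereal A \<le> g z + ereal (z \<bullet> L) + ereal (\<alpha> / 2 * (norm z)\<^sup>2)"
      using min[of z] gx by (simp add: A_def)
    also have "\<dots> \<le> ereal ((1 - t) * a + t * b) + ereal (z \<bullet> L) + ereal (\<alpha> / 2 * (norm z)\<^sup>2)"
      using conv[OF gx gy] t by (intro add_right_mono) (simp add: z_def)
    also have "\<dots> = ereal ((1 - t) * A + t * B - t * (1 - t) * K)"
      unfolding z_def norm_convex_combination_sq A_def B_def K_def
      by (simp add: inner_simps algebra_simps) (simp add: field_simps)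
    finally have "t * A \<le> t * (B - (1 - t) * K)" by (simp add: algebra_simps)
    then show "A \<le> B - (1 - t) * K" using t by simp
  qed
  then show ?thesis by (simp add: A_def B_def K_def)
qed

section \<open>Convergence of the augmented dual ascent scheme\<close>

lemma tendsto_zero_of_norm_sq_tendsto_zero:
  fixes f :: "nat \<Rightarrow> 'a::real_normed_vector"
  assumes "(\<lambda>n. (norm (f n))\<^sup>2) \<longlonglongrightarrow> 0"
  shows "f \<longlonglongrightarrow> 0"
proof -
  have "(\<lambda>n. sqrt ((norm (f n))\<^sup>2)) \<longlonglongrightarrow> sqrt 0" by (intro tendsto_real_sqrt assms)
  then show ?thesis by (simp add: tendsto_norm_zero_iff)
qed

lemma decseq_tendsto_zero_of_subseq:
  fixes e :: "nat \<Rightarrow> real"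
  assumes "decseq e" "\<And>n. 0 \<le> e n" "strict_mono r" "(\<lambda>k. e (r k)) \<longlonglongrightarrow> 0"
  shows "e \<longlonglongrightarrow> 0"
proof -
  obtain E where E: "e \<longlonglongrightarrow> E" using decseq_convergent[OF assms(1)] assms(2) by blast
  then have "(\<lambda>k. e (r k)) \<longlonglongrightarrow> E" using LIMSEQ_subseq_LIMSEQ[OF E assms(3)] by (simp add: o_def)
  then show ?thesis using E assms(4) LIMSEQ_unique by blast
qed

lemma norm_add_scaleR_sq:
  fixes u p :: "'a::real_inner"
  shows "(norm (u + a *\<^sub>R p))\<^sup>2 = (norm u)\<^sup>2 + 2 * a * (p \<bullet> u) + a\<^sup>2 * (norm p)\<^sup>2"
  unfolding power2_norm_eq_inner by (simp add: inner_simps inner_commute algebra_simps power2_eq_square)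

locale augmented_dual_ascent =
  fixes g :: "'a::euclidean_space \<Rightarrow> ereal" and M :: "'a set" and \<alpha> :: real
    and x \<Lambda> :: "nat \<Rightarrow> 'a"
  assumes not_MInf: "\<And>w. g w \<noteq> -\<infinity>"
    and proper: "\<exists>z. g z \<noteq> \<infinity>"
    and convex: "\<And>x y a b t. g x = ereal a \<Longrightarrow> g y = ereal b \<Longrightarrow> 0 \<le> t \<Longrightarrow> t \<le> 1 \<Longrightarrow>
              g ((1 - t) *\<^sub>R x + t *\<^sub>R y) \<le> ereal ((1 - t) * a + t * b)"
    and lsc_sequentially: "\<And>w w0 b b0. w \<longlonglongrightarrow> w0 \<Longrightarrow> b \<longlonglongrightarrow> b0 \<Longrightarrow>
              (\<And>k. g (w k) \<le> ereal (b k)) \<Longrightarrow> g w0 \<le> ereal b0"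
    and step_size: "\<alpha> > 0"
    and subspace: "subspace M"
    and initial: "\<Lambda> 0 = 0"
    and primal_step: "\<And>n y. g (x (Suc n)) + ereal (x (Suc n) \<bullet> \<Lambda> n) + ereal (\<alpha> / 2 * (norm (x (Suc n)))\<^sup>2)
               \<le> g y + ereal (y \<bullet> \<Lambda> n) + ereal (\<alpha> / 2 * (norm y)\<^sup>2)"
    and dual_step: "\<And>n. \<Lambda> (Suc n) = \<Lambda> n + \<alpha> *\<^sub>R proj_perp M (x (Suc n))"
begin

lemma finite_value: obtains z b where "g z = ereal b"
proof -
  obtain z where "g z \<noteq> \<infinity>" using proper by blast
  then show ?thesis using that not_MInf[of z] by (cases "g z") auto
qed

lemma iterate_finite: "g (x (Suc n)) \<noteq> \<infinity>"
proof
  assume "g (x (Suc n)) = \<infinity>"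
  moreover obtain z b where "g z = ereal b" by (rule finite_value)
  ultimately show False using primal_step[of n z] by simp
qed

definition g_iter :: "nat \<Rightarrow> real" where
  "g_iter n = real_of_ereal (g (x (Suc n)))"

lemma g_iter: "g (x (Suc n)) = ereal (g_iter n)"
  using iterate_finite[of n] not_MInf[of "x (Suc n)"] unfolding g_iter_def
  by (cases "g (x (Suc n))") auto

definition residual :: "nat \<Rightarrow> 'a" where
  "residual n = proj_perp M (x n)"

lemma residual: "residual n \<in> orthogonal_comp M" "x n - residual n \<in> M"
  using proj_perp[OF subspace] by (auto simp: residual_def)

lemma multiplier_orthogonal: "\<Lambda> n \<in> orthogonal_comp M"
proof (induction n)
  case 0
  then show ?case using initial subspace_0[OF subspace_orthogonal_comp] by simp
next
  case (Suc n)
  then show ?case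
    using residual(1)[of "Suc n"] subspace_orthogonal_comp[of M]
    by (simp add: dual_step residual_def subspace_add subspace_scale)
qed

definition dual_value :: "nat \<Rightarrow> real" where
  "dual_value n = g_iter n + x (Suc n) \<bullet> \<Lambda> n + \<alpha> / 2 * (norm (x (Suc n)))\<^sup>2"

lemma dual_value_growth:
  "g y = ereal b \<Longrightarrow>
     dual_value n + \<alpha> / 2 * (norm (y - x (Suc n)))\<^sup>2 \<le> b + y \<bullet> \<Lambda> n + \<alpha> / 2 * (norm y)\<^sup>2"
  using minimizer_quadratic_growth[OF convex step_size primal_step g_iter]
  unfolding dual_value_def by blast

lemma dual_value_le: "g y = ereal b \<Longrightarrow> dual_value n \<le> b + y \<bullet> \<Lambda> n + \<alpha> / 2 * (norm y)\<^sup>2"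
  using dual_value_growth[of y b n] step_size
  by (smt (verit) divide_pos_pos mult_nonneg_nonneg zero_le_power2)

lemma dual_value_step: "dual_value n + \<alpha> / 2 * (norm (residual (Suc n)))\<^sup>2 \<le> dual_value (Suc n)"
proof -
  define x1 x2 p p' where "x1 = x (Suc n)" and "x2 = x (Suc (Suc n))"
    and "p = residual (Suc n)" and "p' = residual (Suc (Suc n))"
  have decomp: "p \<in> orthogonal_comp M" "p' \<in> orthogonal_comp M" "x1 - p \<in> M" "x2 - p' \<in> M"
    using residual unfolding p_def p'_def x1_def x2_def by auto
  have growth: "dual_value n + \<alpha> / 2 * (norm (x2 - x1))\<^sup>2 \<le> g_iter (Suc n) + x2 \<bullet> \<Lambda> n + \<alpha> / 2 * (norm x2)\<^sup>2"
    using dual_value_growth[OF g_iter[of "Suc n"], of n] unfolding x1_def x2_def .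
  have "x2 \<bullet> p = (x2 - p') \<bullet> p + p' \<bullet> p" by (simp add: inner_simps)
  then have "x2 \<bullet> p = p' \<bullet> p" using orthogonal_comp_inner_zero[OF decomp(4,1)] by simp
  then have next_value: "dual_value (Suc n) = g_iter (Suc n) + x2 \<bullet> \<Lambda> n + \<alpha> * (p' \<bullet> p) + \<alpha> / 2 * (norm x2)\<^sup>2"
    unfolding dual_value_def x2_def p_def residual_def dual_step by (simp add: inner_simps)
  \<comment> \<open>the residual part of \<open>x2 - x1\<close> is \<open>p' - p\<close>\<close>
  have "x2 - x1 = ((x2 - p') - (x1 - p)) + (p' - p)" by simp
  moreover have "(x2 - p') - (x1 - p) \<in> M" using decomp subspace by (simp add: subspace_diff)
  moreover have "p' - p \<in> orthogonal_comp M"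
    using decomp by (simp add: subspace_diff subspace_orthogonal_comp)
  ultimately have "(norm (p' - p))\<^sup>2 \<le> (norm (x2 - x1))\<^sup>2" using norm_orthogonal_comp_le by metis
  moreover have "(norm (p' - p))\<^sup>2 = (norm p')\<^sup>2 - 2 * (p' \<bullet> p) + (norm p)\<^sup>2"
    by (simp add: power2_norm_eq_inner inner_simps inner_commute)
  ultimately have "(norm p)\<^sup>2 \<le> (norm (x2 - x1))\<^sup>2 + 2 * (p' \<bullet> p)"
    by (smt (verit) zero_le_power2)
  then have "\<alpha> / 2 * (norm p)\<^sup>2 \<le> \<alpha> / 2 * (norm (x2 - x1))\<^sup>2 + \<alpha> * (p' \<bullet> p)"
    using step_size mult_left_mono[of _ _ "\<alpha> / 2"] by (fastforce simp: algebra_simps)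
  with growth next_value show ?thesis unfolding p_def by linarith
qed

lemma incseq_dual_value: "incseq dual_value"
proof (rule incseq_SucI)
  fix n
  show "dual_value n \<le> dual_value (Suc n)"
    using dual_value_step[of n] step_size
    by (smt (verit) divide_pos_pos mult_nonneg_nonneg zero_le_power2)
qed

definition saddle_point :: "'a \<Rightarrow> 'a \<Rightarrow> bool" where
  "saddle_point xs Ls \<longleftrightarrow> xs \<in> M \<and> Ls \<in> orthogonal_comp M \<and>
     (\<forall>y. g xs + ereal (xs \<bullet> Ls) + ereal (\<alpha> / 2 * (norm xs)\<^sup>2)
            \<le> g y + ereal (y \<bullet> Ls) + ereal (\<alpha> / 2 * (norm y)\<^sup>2))"

lemma saddle_point_finite:
  assumes "saddle_point xs Ls"
  obtains a where "g xs = ereal a"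
proof -
  obtain z b where z: "g z = ereal b" by (rule finite_value)
  have "g xs + ereal (xs \<bullet> Ls) + ereal (\<alpha> / 2 * (norm xs)\<^sup>2)
          \<le> g z + ereal (z \<bullet> Ls) + ereal (\<alpha> / 2 * (norm z)\<^sup>2)"
    using assms unfolding saddle_point_def by blast
  with z have "g xs \<noteq> \<infinity>" by auto
  then show ?thesis using that not_MInf[of xs] by (cases "g xs") auto
qed

lemma saddle_point_minimizes:
  assumes "saddle_point xs Ls" "y \<in> M"
  shows "g xs + ereal (\<alpha> / 2 * (norm xs)\<^sup>2) \<le> g y + ereal (\<alpha> / 2 * (norm y)\<^sup>2)"
proof -
  have "xs \<bullet> Ls = 0" "y \<bullet> Ls = 0"
    using assms orthogonal_comp_inner_zero unfolding saddle_point_def by blast+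
  moreover have "g xs + ereal (xs \<bullet> Ls) + ereal (\<alpha> / 2 * (norm xs)\<^sup>2)
                   \<le> g y + ereal (y \<bullet> Ls) + ereal (\<alpha> / 2 * (norm y)\<^sup>2)"
    using assms unfolding saddle_point_def by blast
  ultimately show ?thesis by simp
qed

lemma fejer_step:
  assumes "saddle_point xs Ls"
  shows "\<alpha>\<^sup>2 * (norm (x (Suc n) - xs))\<^sup>2 + (norm (\<Lambda> (Suc n) - Ls))\<^sup>2 \<le> (norm (\<Lambda> n - Ls))\<^sup>2"
proof -
  obtain a where a: "g xs = ereal a" using assms by (rule saddle_point_finite)
  have xs: "xs \<in> M" and Ls: "Ls \<in> orthogonal_comp M"
    and min: "\<And>y. g xs + ereal (xs \<bullet> Ls) + ereal (\<alpha> / 2 * (norm xs)\<^sup>2)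
                    \<le> g y + ereal (y \<bullet> Ls) + ereal (\<alpha> / 2 * (norm y)\<^sup>2)"
    using assms unfolding saddle_point_def by auto
  define x1 p D where "x1 = x (Suc n)" and "p = residual (Suc n)" and "D = (norm (x1 - xs))\<^sup>2"
  have at_saddle: "a + xs \<bullet> Ls + \<alpha> / 2 * (norm xs)\<^sup>2 + \<alpha> / 2 * D \<le> g_iter n + x1 \<bullet> Ls + \<alpha> / 2 * (norm x1)\<^sup>2"
    using minimizer_quadratic_growth[OF convex step_size min a g_iter[of n]]
    unfolding x1_def D_def .
  have at_iterate: "dual_value n + \<alpha> / 2 * D \<le> a + xs \<bullet> \<Lambda> n + \<alpha> / 2 * (norm xs)\<^sup>2"
    using dual_value_growth[OF a, of n] unfolding x1_def D_def by (simp add: norm_minus_commute)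
  have p: "x1 - p \<in> M" "p \<in> orthogonal_comp M" using residual unfolding x1_def p_def by auto
  have "x1 \<bullet> \<Lambda> n = (x1 - p) \<bullet> \<Lambda> n + p \<bullet> \<Lambda> n" "x1 \<bullet> Ls = (x1 - p) \<bullet> Ls + p \<bullet> Ls"
    by (simp_all add: inner_simps)
  moreover have "xs \<bullet> \<Lambda> n = 0" "xs \<bullet> Ls = 0" "(x1 - p) \<bullet> \<Lambda> n = 0" "(x1 - p) \<bullet> Ls = 0"
    using orthogonal_comp_inner_zero xs Ls p(1) multiplier_orthogonal by blast+
  ultimately have descent: "p \<bullet> (\<Lambda> n - Ls) \<le> - \<alpha> * D"
    using at_saddle at_iterate unfolding dual_value_def x1_def[symmetric] by (simp add: inner_simps)
  have "x1 - xs = (x1 - p - xs) + p" by simp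
  moreover have "x1 - p - xs \<in> M" using p xs subspace by (simp add: subspace_diff)
  ultimately have "(norm p)\<^sup>2 \<le> D" unfolding D_def using norm_orthogonal_comp_le[OF _ p(2)] by metis
  then have "\<alpha>\<^sup>2 * (norm p)\<^sup>2 \<le> \<alpha>\<^sup>2 * D" by (simp add: mult_left_mono)
  moreover have "2 * \<alpha> * (p \<bullet> (\<Lambda> n - Ls)) \<le> - 2 * (\<alpha>\<^sup>2 * D)"
    using mult_left_mono[OF descent, of "2 * \<alpha>"] step_size by (simp add: power2_eq_square)
  moreover have "\<Lambda> (Suc n) - Ls = (\<Lambda> n - Ls) + \<alpha> *\<^sub>R p"
    by (simp add: dual_step p_def residual_def)
  then have "(norm (\<Lambda> (Suc n) - Ls))\<^sup>2
               = (norm (\<Lambda> n - Ls))\<^sup>2 + 2 * \<alpha> * (p \<bullet> (\<Lambda> n - Ls)) + \<alpha>\<^sup>2 * (norm p)\<^sup>2"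
    by (simp only: norm_add_scaleR_sq)
  ultimately show ?thesis unfolding D_def x1_def by linarith
qed

lemma residual_tendsto_zero_if_bounded:
  assumes "bounded (range \<Lambda>)"
  shows "(\<lambda>n. residual (Suc n)) \<longlonglongrightarrow> 0"
proof -
  obtain B where B: "\<And>n. norm (\<Lambda> n) \<le> B" using assms unfolding bounded_iff by auto
  obtain z b where z: "g z = ereal b" by (rule finite_value)
  have "dual_value n \<le> b + norm z * B + \<alpha> / 2 * (norm z)\<^sup>2" for n
  proof -
    have "z \<bullet> \<Lambda> n \<le> norm z * B"
      using norm_cauchy_schwarz[of z "\<Lambda> n"] B[of n] mult_left_mono[of _ B "norm z"] by force
    then show ?thesis using dual_value_le[OF z, of n] by linarith
  qed
  then obtain D where D: "dual_value \<longlonglongrightarrow> D"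
    using incseq_convergent[OF incseq_dual_value] by blast
  have "(\<lambda>n. 2 / \<alpha> * (dual_value (Suc n) - dual_value n)) \<longlonglongrightarrow> 2 / \<alpha> * (D - D)"
    by (intro tendsto_intros D LIMSEQ_Suc)
  then have increments: "(\<lambda>n. 2 / \<alpha> * (dual_value (Suc n) - dual_value n)) \<longlonglongrightarrow> 0"
    by simp
  have "(\<lambda>n. (norm (residual (Suc n)))\<^sup>2) \<longlonglongrightarrow> 0"
    by (rule tendsto_sandwich[OF _ _ tendsto_const increments])
      (use dual_value_step step_size in \<open>auto simp: field_simps\<close>)
  then show ?thesis by (rule tendsto_zero_of_norm_sq_tendsto_zero)
qed

lemma iterates_bounded_if_bounded:
  assumes "bounded (range \<Lambda>)"
  shows "bounded (range (\<lambda>n. x (Suc n)))"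
proof -
  obtain B where B: "\<And>n. norm (\<Lambda> n) \<le> B" using assms unfolding bounded_iff by auto
  obtain z b where z: "g z = ereal b" by (rule finite_value)
  define R where "R = (b + norm z * B + \<alpha> / 2 * (norm z)\<^sup>2 - dual_value 0) * 2 / \<alpha>"
  have "norm (x (Suc n)) \<le> norm z + sqrt R" for n
  proof -
    have "z \<bullet> \<Lambda> n \<le> norm z * B"
      using norm_cauchy_schwarz[of z "\<Lambda> n"] B[of n] mult_left_mono[of _ B "norm z"] by force
    moreover have "dual_value 0 \<le> dual_value n" using incseq_dual_value by (simp add: incseq_def)
    ultimately have "\<alpha> / 2 * (norm (z - x (Suc n)))\<^sup>2
                       \<le> b + norm z * B + \<alpha> / 2 * (norm z)\<^sup>2 - dual_value 0"
      using dual_value_growth[OF z, of n] by linarith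
    then have "norm (z - x (Suc n)) \<le> sqrt R"
      using step_size by (intro real_le_rsqrt) (simp add: R_def field_simps)
    then show ?thesis by (metis norm_minus_commute norm_triangle_sub order_trans add_left_mono)
  qed
  then show ?thesis unfolding bounded_iff by blast
qed

lemma saddle_point_of_cluster_point:
  assumes "strict_mono r" "(\<lambda>k. \<Lambda> (r k)) \<longlonglongrightarrow> Ls" "(\<lambda>k. x (Suc (r k))) \<longlonglongrightarrow> xs"
    and "(\<lambda>n. residual (Suc n)) \<longlonglongrightarrow> 0"
  shows "saddle_point xs Ls"
proof -
  have "(\<lambda>k. residual (Suc (r k))) \<longlonglongrightarrow> 0"
    using LIMSEQ_subseq_LIMSEQ[OF assms(4,1)] by (simp add: o_def)
  from tendsto_diff[OF assms(3) this]
  have "(\<lambda>k. x (Suc (r k)) - residual (Suc (r k))) \<longlonglongrightarrow> xs" by simp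
  then have "xs \<in> M"
    by (rule closed_sequentially[OF closed_subspace[OF subspace], rotated]) (use residual(2) in blast)
  have "Ls \<in> orthogonal_comp M"
    by (rule closed_sequentially[OF closed_subspace[OF subspace_orthogonal_comp], OF _ assms(2)])
      (use multiplier_orthogonal in blast)
  have "g xs + ereal (xs \<bullet> Ls) + ereal (\<alpha> / 2 * (norm xs)\<^sup>2)
          \<le> g y + ereal (y \<bullet> Ls) + ereal (\<alpha> / 2 * (norm y)\<^sup>2)" for y
  proof (cases "g y")
    case (real b)
    have "g xs \<le> ereal (b + y \<bullet> Ls + \<alpha> / 2 * (norm y)\<^sup>2 - xs \<bullet> Ls - \<alpha> / 2 * (norm xs)\<^sup>2)"
    proof (rule lsc_sequentially[OF assms(3)])
      show "(\<lambda>k. b + y \<bullet> \<Lambda> (r k) + \<alpha> / 2 * (norm y)\<^sup>2 - x (Suc (r k)) \<bullet> \<Lambda> (r k)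
                  - \<alpha> / 2 * (norm (x (Suc (r k))))\<^sup>2)
              \<longlonglongrightarrow> b + y \<bullet> Ls + \<alpha> / 2 * (norm y)\<^sup>2 - xs \<bullet> Ls - \<alpha> / 2 * (norm xs)\<^sup>2"
        by (intro tendsto_intros assms(2,3))
      show "g (x (Suc (r k))) \<le> ereal (b + y \<bullet> \<Lambda> (r k) + \<alpha> / 2 * (norm y)\<^sup>2
              - x (Suc (r k)) \<bullet> \<Lambda> (r k) - \<alpha> / 2 * (norm (x (Suc (r k))))\<^sup>2)" for k
        using dual_value_le[OF real, of "r k"] unfolding g_iter dual_value_def by simp
    qed
    then show ?thesis using real by (cases "g xs") auto
  qed (use not_MInf in auto)
  with \<open>xs \<in> M\<close> \<open>Ls \<in> orthogonal_comp M\<close> show ?thesis unfolding saddle_point_def by blast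
qed

lemma convergent_if_bounded:
  assumes "bounded (range \<Lambda>)"
  shows "\<exists>xs Ls. (\<lambda>n. x (Suc n)) \<longlonglongrightarrow> xs \<and> \<Lambda> \<longlonglongrightarrow> Ls \<and> saddle_point xs Ls"
proof -
  have "bounded (range (\<lambda>n. (\<Lambda> n, x (Suc n))))"
    by (rule bounded_subset[OF bounded_Times[OF assms iterates_bounded_if_bounded[OF assms]]]) auto
  then obtain r l where r: "strict_mono r" and sub: "((\<lambda>n. (\<Lambda> n, x (Suc n))) \<circ> r) \<longlonglongrightarrow> l"
    using bounded_imp_convergent_subsequence by blast
  obtain Ls xs where l: "l = (Ls, xs)" by fastforce
  have Ls: "(\<lambda>k. \<Lambda> (r k)) \<longlonglongrightarrow> Ls" and xs: "(\<lambda>k. x (Suc (r k))) \<longlonglongrightarrow> xs"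
    using tendsto_fst[OF sub] tendsto_snd[OF sub] by (simp_all add: l o_def)
  have saddle: "saddle_point xs Ls"
    using saddle_point_of_cluster_point[OF r Ls xs residual_tendsto_zero_if_bounded[OF assms]] .
  define e where "e n = (norm (\<Lambda> n - Ls))\<^sup>2" for n
  have fejer: "\<alpha>\<^sup>2 * (norm (x (Suc n) - xs))\<^sup>2 \<le> e n - e (Suc n)" for n
    using fejer_step[OF saddle, of n] unfolding e_def by linarith
  have "decseq e"
    by (rule decseq_SucI) (use fejer in \<open>smt (verit) mult_nonneg_nonneg zero_le_power2\<close>)
  moreover have "(\<lambda>k. e (r k)) \<longlonglongrightarrow> 0"
    using tendsto_power[OF tendsto_norm[OF LIM_zero[OF Ls]], of 2] by (simp add: e_def)
  ultimately have e: "e \<longlonglongrightarrow> 0"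
    using decseq_tendsto_zero_of_subseq[OF _ _ r] by (simp add: e_def)
  then have "(\<lambda>n. \<Lambda> n - Ls) \<longlonglongrightarrow> 0"
    unfolding e_def by (rule tendsto_zero_of_norm_sq_tendsto_zero)
  then have multipliers: "\<Lambda> \<longlonglongrightarrow> Ls" by (rule LIM_zero_cancel)
  have "(\<lambda>n. e n - e (Suc n)) \<longlonglongrightarrow> 0"
    using tendsto_diff[OF e LIMSEQ_Suc[OF e]] by simp
  then have decrements: "(\<lambda>n. (e n - e (Suc n)) / \<alpha>\<^sup>2) \<longlonglongrightarrow> 0"
    by (rule tendsto_divide_zero)
  have "(\<lambda>n. (norm (x (Suc n) - xs))\<^sup>2) \<longlonglongrightarrow> 0"
    by (rule tendsto_sandwich[OF _ _ tendsto_const decrements])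
      (use fejer step_size in \<open>auto simp: field_simps\<close>)
  then have "(\<lambda>n. x (Suc n) - xs) \<longlonglongrightarrow> 0" by (rule tendsto_zero_of_norm_sq_tendsto_zero)
  then have "(\<lambda>n. x (Suc n)) \<longlonglongrightarrow> xs" by (rule LIM_zero_cancel)
  with multipliers saddle show ?thesis by blast
qed

lemma bounded_if_finite:
  assumes "\<And>w. g w \<noteq> \<infinity>"
  shows "bounded (range \<Lambda>)"
proof -
  define h where "h w = real_of_ereal (g w)" for w
  have g_h: "g w = ereal (h w)" for w
    using assms[of w] not_MInf[of w] unfolding h_def by (cases "g w") auto
  have "convex_on UNIV h"
    by (rule convex_onI) (use convex[OF g_h g_h] g_h in auto)
  then have "continuous_on (cball 0 1) h"
    using convex_on_continuous[OF open_UNIV] continuous_on_subset by blast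
  then obtain u0 where u0: "\<forall>u\<in>cball 0 1. h u \<le> h u0"
    using continuous_attains_sup[of "cball (0::'a) 1" h] by auto
  have "norm (\<Lambda> n) \<le> max 0 (h u0 + \<alpha> / 2 - dual_value 0)" for n
  proof (cases "\<Lambda> n = 0")
    case False
    define u where "u = - (1 / norm (\<Lambda> n)) *\<^sub>R \<Lambda> n"
    have "norm u = 1" using False by (simp add: u_def)
    then have "h u \<le> h u0" using u0 by simp
    moreover have "u \<bullet> \<Lambda> n = - norm (\<Lambda> n)"
      using False by (simp add: u_def power2_norm_eq_inner[symmetric] power2_eq_square)
    moreover have "dual_value 0 \<le> dual_value n" using incseq_dual_value by (simp add: incseq_def)
    ultimately have "norm (\<Lambda> n) \<le> h u0 + \<alpha> / 2 - dual_value 0"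
      using dual_value_le[OF g_h[of u], of n] \<open>norm u = 1\<close> by simp
    then show ?thesis by simp
  qed simp
  then show ?thesis unfolding bounded_iff by blast
qed

end

theorem theorem5:
  fixes N :: "'a::euclidean_space \<Rightarrow> ereal"
    and M :: "'a set"
    and \<alpha> :: real
    and x \<Lambda> :: "nat \<Rightarrow> 'a"
  assumes "\<alpha> > 0"
    and "feasible N"
    and "subspace M"
    and "\<Lambda> 0 = 0"
    and "\<And>n y. fconj (fconj N) (x (Suc n)) + ereal (x (Suc n) \<bullet> \<Lambda> n)
                  + ereal (\<alpha> / 2 * (norm (x (Suc n)))\<^sup>2)
               \<le> fconj (fconj N) y + ereal (y \<bullet> \<Lambda> n) + ereal (\<alpha> / 2 * (norm y)\<^sup>2)"
    and "\<And>n. \<Lambda> (Suc n) = \<Lambda> n + \<alpha> *\<^sub>R proj_perp M (x (Suc n))"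
    and "(\<forall>z. N z \<noteq> \<infinity>) \<or> bounded (range (\<lambda>n. \<Lambda> (Suc n)))"
  shows "\<exists>xs Ls. (\<lambda>n. x (Suc n)) \<longlonglongrightarrow> xs \<and> \<Lambda> \<longlonglongrightarrow> Ls \<and> xs \<in> M \<and>
           (\<forall>y\<in>M. fconj (fconj N) xs + ereal (\<alpha> / 2 * (norm xs)\<^sup>2)
                     \<le> fconj (fconj N) y + ereal (\<alpha> / 2 * (norm y)\<^sup>2))"
proof -
  obtain c where "\<And>w. ereal c \<le> N w" using assms(2) unfolding feasible_def by auto
  then have bounded_below: "\<And>w. ereal c \<le> fconj (fconj N) w" by (rule biconj_ge_const)
  obtain z where "N z \<noteq> \<infinity>" using assms(2) unfolding feasible_def by auto
  then have proper: "fconj (fconj N) z \<noteq> \<infinity>" using biconj_le[of N z] by auto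
  interpret augmented_dual_ascent "fconj (fconj N)" M \<alpha> x \<Lambda>
  proof unfold_locales
    show "fconj (fconj N) w \<noteq> -\<infinity>" for w using bounded_below[of w] by auto
  qed (use assms proper in \<open>auto intro: biconj_convex biconj_lsc_sequentially\<close>)
  have "bounded (range \<Lambda>)"
    using assms(7)
  proof
    assume finite: "\<forall>z. N z \<noteq> \<infinity>"
    have "fconj (fconj N) w \<noteq> \<infinity>" for w using biconj_le[of N w] finite by auto
    then show ?thesis by (rule bounded_if_finite)
  next
    assume "bounded (range (\<lambda>n. \<Lambda> (Suc n)))"
    then show ?thesis by (subst UNIV_nat_eq) (simp add: image_image)
  qed
  then obtain xs Ls where "(\<lambda>n. x (Suc n)) \<longlonglongrightarrow> xs" "\<Lambda> \<longlonglongrightarrow> Ls" "saddle_point xs Ls"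
    using convergent_if_bounded by blast
  then show ?thesis using saddle_point_minimizes saddle_point_def by blast
qed

end
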